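(* Let $0<p<1$ and $\alpha>-1$, and consider the urn transfer process described in the context (the $p_k$-model), assumed well defined, i.e. $0\le p_{k+1}\le 1$ at every stage. Let $B(k)=\sum_{i\ge 1}F_i(k)$ be the total number of balls after $k$ steps. Then for every integer $k>1$, $$E(B(k)) = E\Big(\sum_{i=1}^k F_i(k)\Big) = 1+(k-1)p \quad\text{and}\quad E(p_k)=p.$$
   Context: Urn transfer model ($p_k$-model). There are countably many urns $urn_1,urn_2,\dots$; each ball in $urn_i$ carries $i$ pins. Let $F_i(k)$ be the number of balls in $urn_i$ after $k$ steps. Initially (stage $k=1$) $F_1(1)=1$ and $F_i(1)=0$ for $i>1$. Fix parameters $0<p<1$ and $\alpha>-1$. At stage $k+1$ ($k\ge1$) one of two things happens: (i) with probability $$p_{k+1}=1-\frac{(1-p)\sum_{i=1}^k (i+\alpha)F_i(k)}{k(1+\alpha p)+\alpha(1-p)},$$ a new ball (with one pin) is added to $urn_1$; (ii) with probability $1-p_{k+1}$, an urn is selected, $urn_i$ being chosen with probability $\frac{(1-p)(i+\alpha)F_i(k)}{k(1+\alpha p)+\alpha(1-p)}$ for $1\le i\le k$, and one ball of $urn_i$ is moved to $urn_{i+1}$ (i.e. receives an extra pin). The process is only defined when $0\le p_{k+1}\le1$ at each stage. The total number of pins after $k$ steps is $\sum_i iF_i(k)=k$, and $F_i(k)=0$ for $i>k$. $E$ denotes expectation over the randomness of the process. *)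

theory Defs
  imports "HOL-Probability.Probability"
begin

text \<open>Urn transfer model (p_k-model). A state is F :: nat => nat, where F i is the
number of balls in urn i (i >= 1); index 0 is unused and always 0.
Stages are indexed from k = 1.\<close>

definition urn_init :: "nat \<Rightarrow> nat" where
  "urn_init = (\<lambda>i. if i = 1 then 1 else 0)"

definition urn_den :: "real \<Rightarrow> real \<Rightarrow> nat \<Rightarrow> real" where
  "urn_den p \<alpha> k = real k * (1 + \<alpha> * p) + \<alpha> * (1 - p)"

text \<open>p_{k+1}, computed from the state F = F(k) after k steps.\<close>
definition urn_pnext :: "real \<Rightarrow> real \<Rightarrow> nat \<Rightarrow> (nat \<Rightarrow> nat) \<Rightarrow> real" where
  "urn_pnext p \<alpha> k F =
     1 - (1 - p) * (\<Sum>i=1..k. (real i + \<alpha>) * real (F i)) / urn_den p \<alpha> k"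

definition urn_choose :: "real \<Rightarrow> real \<Rightarrow> nat \<Rightarrow> (nat \<Rightarrow> nat) \<Rightarrow> nat \<Rightarrow> real" where
  "urn_choose p \<alpha> k F i = (1 - p) * (real i + \<alpha>) * real (F i) / urn_den p \<alpha> k"

text \<open>Outcome of stage k+1: None = new ball in urn 1; Some i = a ball of urn i moves to urn i+1.\<close>
definition urn_step_pmf :: "real \<Rightarrow> real \<Rightarrow> nat \<Rightarrow> (nat \<Rightarrow> nat) \<Rightarrow> nat option pmf" where
  "urn_step_pmf p \<alpha> k F = embed_pmf (\<lambda>oc. case oc of
       None \<Rightarrow> urn_pnext p \<alpha> k F
     | Some i \<Rightarrow> (if 1 \<le> i \<and> i \<le> k then urn_choose p \<alpha> k F i else 0))"

definition urn_apply :: "(nat \<Rightarrow> nat) \<Rightarrow> nat option \<Rightarrow> (nat \<Rightarrow> nat)" where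
  "urn_apply F oc = (case oc of
       None \<Rightarrow> F(1 := F 1 + 1)
     | Some i \<Rightarrow> F(i := F i - 1, Suc i := F (Suc i) + 1))"

text \<open>Distribution of the state (F_i(k))_i after k steps (k >= 1; k = 0 is a dummy).\<close>
fun urn_dist :: "real \<Rightarrow> real \<Rightarrow> nat \<Rightarrow> (nat \<Rightarrow> nat) pmf" where
  "urn_dist p \<alpha> 0 = return_pmf urn_init"
| "urn_dist p \<alpha> (Suc 0) = return_pmf urn_init"
| "urn_dist p \<alpha> (Suc (Suc k)) =
     urn_dist p \<alpha> (Suc k) \<bind> (\<lambda>F. map_pmf (urn_apply F) (urn_step_pmf p \<alpha> (Suc k) F))"

end

theory Submission
  imports Defs
begin

text \<open>A stage increases the number of balls by one if a new ball is added and leaves it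
unchanged if a ball is moved, so \<open>E B(k+1) = E B(k) + E p\<^sub>k\<^sub>+\<^sub>1\<close>. Since the balls of
\<open>F(k)\<close> carry \<open>k\<close> pins in total, \<open>p\<^sub>k\<^sub>+\<^sub>1\<close> is an affine function of \<open>B(k)\<close>, and the
denominator \<open>k(1+\<alpha>p)+\<alpha>(1-p)\<close> is exactly \<open>k + \<alpha>(1+(k-1)p)\<close>; hence \<open>E B(k) = 1+(k-1)p\<close>
forces \<open>E p\<^sub>k\<^sub>+\<^sub>1 = p\<close>, and both claims follow together by induction on \<open>k\<close>.\<close>

lemma expectation_cong_pmf:
  fixes f g :: "'a \<Rightarrow> real"
  assumes "\<And>x. x \<in> set_pmf M \<Longrightarrow> f x = g x"
  shows "measure_pmf.expectation M f = measure_pmf.expectation M g"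
  using assms by (intro integral_cong_AE) (auto simp: AE_measure_pmf_iff)

lemma expectation_bind_pmf_finite:
  fixes f :: "'b \<Rightarrow> real"
  assumes "finite (set_pmf M)" and "\<And>x. x \<in> set_pmf M \<Longrightarrow> finite (set_pmf (N x))"
  shows "measure_pmf.expectation (M \<bind> N) f
       = measure_pmf.expectation M (\<lambda>x. measure_pmf.expectation (N x) f)"
  using assms
  by (simp add: pmf_expectation_bind[where A = "set_pmf M"] integral_measure_pmf[where A = "set_pmf M"])

lemma sum_fun_upd:
  fixes g :: "'a \<Rightarrow> 'b \<Rightarrow> 'c::ab_group_add"
  assumes "finite A" and "a \<in> A"
  shows "(\<Sum>j\<in>A. g j ((F(a := v)) j)) = (\<Sum>j\<in>A. g j (F j)) + (g a v - g a (F a))"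
proof -
  have "(\<Sum>j\<in>A - {a}. g j ((F(a := v)) j)) = (\<Sum>j\<in>A - {a}. g j (F j))"
    by (rule sum.cong) auto
  then show ?thesis
    using assms by (simp add: sum.remove)
qed

definition urn_step_prob :: "real \<Rightarrow> real \<Rightarrow> nat \<Rightarrow> (nat \<Rightarrow> nat) \<Rightarrow> nat option \<Rightarrow> real" where
  "urn_step_prob p \<alpha> k F oc = (case oc of
       None \<Rightarrow> urn_pnext p \<alpha> k F
     | Some i \<Rightarrow> (if 1 \<le> i \<and> i \<le> k then urn_choose p \<alpha> k F i else 0))"

lemma urn_step_pmf_eq_embed_pmf: "urn_step_pmf p \<alpha> k F = embed_pmf (urn_step_prob p \<alpha> k F)"
  unfolding urn_step_pmf_def urn_step_prob_def ..

lemma urn_den_pos: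
  assumes "0 \<le> p" "p \<le> 1" "\<alpha> > -1" "k \<ge> 1"
  shows "urn_den p \<alpha> k > 0"
proof -
  define X where "X = 1 + (real k - 1) * p"
  have "(real k - 1) * p \<ge> 0" and "(real k - 1) * (1 - p) \<ge> 0"
    using assms by auto
  then have "X > 0"
    unfolding X_def by linarith
  moreover have "urn_den p \<alpha> k = (real k - 1) * (1 - p) + (1 + \<alpha>) * X"
    unfolding urn_den_def X_def by (simp add: algebra_simps)
  ultimately show ?thesis
    using assms(3) \<open>(real k - 1) * (1 - p) \<ge> 0\<close> by (simp add: add_nonneg_pos)
qed

lemma sum_urn_step_prob: "(\<Sum>oc\<in>insert None (Some ` {1..k}). urn_step_prob p \<alpha> k F oc) = 1"
proof -
  have "(\<Sum>i=1..k. urn_choose p \<alpha> k F i)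
      = (1 - p) * (\<Sum>i=1..k. (real i + \<alpha>) * real (F i)) / urn_den p \<alpha> k"
    unfolding urn_choose_def by (simp add: sum_divide_distrib sum_distrib_left mult.assoc)
  moreover have "(\<Sum>oc\<in>Some ` {1..k}. urn_step_prob p \<alpha> k F oc) = (\<Sum>i=1..k. urn_choose p \<alpha> k F i)"
    by (simp add: sum.reindex urn_step_prob_def)
  ultimately show ?thesis
    by (simp add: urn_step_prob_def urn_pnext_def)
qed

lemma urn_step_prob_nonneg:
  assumes "0 \<le> p" "p \<le> 1" "\<alpha> > -1" "k \<ge> 1" "0 \<le> urn_pnext p \<alpha> k F"
  shows "0 \<le> urn_step_prob p \<alpha> k F oc"
proof (cases oc)
  case (Some i)
  have "real i + \<alpha> > 0" if "1 \<le> i"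
  proof -
    have "real i \<ge> 1"
      using that by simp
    then show ?thesis
      using assms(3) by linarith
  qed
  then show ?thesis
    using Some assms urn_den_pos[OF assms(1-4)]
    by (auto simp: urn_step_prob_def urn_choose_def)
qed (use assms in \<open>simp add: urn_step_prob_def\<close>)

lemma pmf_urn_step_pmf:
  assumes "0 \<le> p" "p \<le> 1" "\<alpha> > -1" "k \<ge> 1" "0 \<le> urn_pnext p \<alpha> k F"
  shows "pmf (urn_step_pmf p \<alpha> k F) oc = urn_step_prob p \<alpha> k F oc"
proof -
  note nonneg = urn_step_prob_nonneg[OF assms]
  have "(\<integral>\<^sup>+oc. ennreal (urn_step_prob p \<alpha> k F oc) \<partial>count_space UNIV)
      = (\<Sum>oc\<in>insert None (Some ` {1..k}). ennreal (urn_step_prob p \<alpha> k F oc))"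
    by (rule nn_integral_count_space') (auto simp: urn_step_prob_def split: option.splits)
  also have "\<dots> = ennreal (\<Sum>oc\<in>insert None (Some ` {1..k}). urn_step_prob p \<alpha> k F oc)"
    using nonneg by (rule sum_ennreal)
  also have "\<dots> = 1"
    by (simp only: sum_urn_step_prob ennreal_1)
  finally show ?thesis
    unfolding urn_step_pmf_eq_embed_pmf by (rule pmf_embed_pmf[OF nonneg])
qed

lemma set_urn_step_pmf:
  assumes "0 \<le> p" "p \<le> 1" "\<alpha> > -1" "k \<ge> 1" "0 \<le> urn_pnext p \<alpha> k F"
  shows "set_pmf (urn_step_pmf p \<alpha> k F) \<subseteq> insert None (Some ` {i. 1 \<le> i \<and> i \<le> k \<and> 0 < F i})"
  using pmf_urn_step_pmf[OF assms]
  by (force simp: set_pmf_eq urn_step_prob_def urn_choose_def split: option.splits if_splits)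

lemma sum_urn_apply_None:
  fixes w :: "nat \<Rightarrow> real"
  assumes "finite A" and "1 \<in> A"
  shows "(\<Sum>j\<in>A. w j * real (urn_apply F None j)) = (\<Sum>j\<in>A. w j * real (F j)) + w 1"
  unfolding urn_apply_def option.case sum_fun_upd[OF assms, of "\<lambda>j v. w j * real v"]
  by (simp add: algebra_simps)

lemma sum_urn_apply_Some:
  fixes w :: "nat \<Rightarrow> real"
  assumes "finite A" and "i \<in> A" and "Suc i \<in> A" and "0 < F i"
  shows "(\<Sum>j\<in>A. w j * real (urn_apply F (Some i) j))
       = (\<Sum>j\<in>A. w j * real (F j)) - w i + w (Suc i)"
  unfolding urn_apply_def option.case sum_fun_upd[OF assms(1,3), of "\<lambda>j v. w j * real v"]
    sum_fun_upd[OF assms(1,2), of "\<lambda>j v. w j * real v"]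
  using assms(4) by (simp add: of_nat_diff algebra_simps)

definition urn_state :: "nat \<Rightarrow> (nat \<Rightarrow> nat) \<Rightarrow> bool" where
  "urn_state k F \<longleftrightarrow> F 0 = 0 \<and> (\<forall>i>k. F i = 0) \<and> (\<Sum>i=1..k. real i * real (F i)) = real k"

definition urn_balls :: "nat \<Rightarrow> (nat \<Rightarrow> nat) \<Rightarrow> real" where
  "urn_balls k F = (\<Sum>i=1..k. real (F i))"

lemma urn_state_init: "urn_state 1 urn_init"
  by (simp add: urn_state_def urn_init_def)

lemma sum_Suc_urn_state:
  fixes w :: "nat \<Rightarrow> real"
  assumes "urn_state k F"
  shows "(\<Sum>j=1..Suc k. w j * real (F j)) = (\<Sum>j=1..k. w j * real (F j))"
  using assms by (simp add: urn_state_def sum.cl_ivl_Suc)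

lemma urn_state_urn_apply:
  assumes "urn_state k F" and "k \<ge> 1"
    and "oc \<in> insert None (Some ` {i. 1 \<le> i \<and> i \<le> k \<and> 0 < F i})"
  shows "urn_state (Suc k) (urn_apply F oc)"
    and "urn_balls (Suc k) (urn_apply F oc) = urn_balls k F + (if oc = None then 1 else 0)"
proof -
  let ?S = "\<lambda>w G. \<Sum>j=1..Suc k. w j * real (G j)"
  have "?S real (urn_apply F oc) = ?S real F + 1 \<and> ?S (\<lambda>_. 1) (urn_apply F oc) = ?S (\<lambda>_. 1) F + (if oc = None then 1 else 0)"
  proof -
    consider "oc = None" | i where "oc = Some i" "1 \<le> i" "i \<le> k" "0 < F i"
      using assms(3) by auto
    then show ?thesis
    proof cases
      case 1
      then show ?thesis
        using assms(2) sum_urn_apply_None[where A = "{1..Suc k}" and w = real]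
          sum_urn_apply_None[where A = "{1..Suc k}" and w = "\<lambda>_. 1"]
        by (simp del: sum.cl_ivl_Suc)
    next
      case 2
      then show ?thesis
        using sum_urn_apply_Some[where A = "{1..Suc k}" and w = real]
          sum_urn_apply_Some[where A = "{1..Suc k}" and w = "\<lambda>_. 1"]
        by (simp del: sum.cl_ivl_Suc)
    qed
  qed
  moreover have "?S real F = real k" and "?S (\<lambda>_. 1) F = urn_balls k F"
    using sum_Suc_urn_state[OF assms(1)] assms(1) by (simp_all add: urn_state_def urn_balls_def)
  moreover have "urn_apply F oc 0 = 0 \<and> (\<forall>i>Suc k. urn_apply F oc i = 0)"
    using assms(1,3) by (auto simp: urn_state_def urn_apply_def)
  ultimately show "urn_state (Suc k) (urn_apply F oc)"
    and "urn_balls (Suc k) (urn_apply F oc) = urn_balls k F + (if oc = None then 1 else 0)"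
    by (simp_all add: urn_state_def urn_balls_def)
qed

lemma urn_pnext_urn_state:
  assumes "urn_state k F"
  shows "urn_pnext p \<alpha> k F = 1 - (1 - p) * (real k + \<alpha> * urn_balls k F) / urn_den p \<alpha> k"
proof -
  have "(\<Sum>i=1..k. (real i + \<alpha>) * real (F i))
      = (\<Sum>i=1..k. real i * real (F i)) + \<alpha> * urn_balls k F"
    by (simp add: urn_balls_def algebra_simps sum.distrib sum_distrib_left)
  then show ?thesis
    using assms by (simp add: urn_pnext_def urn_state_def)
qed

lemma infsum_urn_state:
  assumes "urn_state k F"
  shows "infsum (\<lambda>i. real (F i)) {1..} = urn_balls k F"
  using assms unfolding urn_balls_def urn_state_def
  by (subst infsum_cong_neutral[where T = "{1..k}"]) auto

lemma urn_dist_Suc: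
  assumes "k \<ge> 1"
  shows "urn_dist p \<alpha> (Suc k) = urn_dist p \<alpha> k \<bind> (\<lambda>F. map_pmf (urn_apply F) (urn_step_pmf p \<alpha> k F))"
  using assms by (cases k) auto

text \<open>\<open>p\<^sub>k\<^sub>+\<^sub>1 \<le> 1\<close> need not be assumed: it follows from the nonnegativity of the
transfer probabilities, which sum to \<open>1 - p\<^sub>k\<^sub>+\<^sub>1\<close>.\<close>

locale urn_process =
  fixes p \<alpha> :: real
  assumes p_nonneg: "0 \<le> p" and p_le_1: "p \<le> 1" and alpha_gt: "\<alpha> > -1"
    and urn_pnext_nonneg: "\<And>k F. k \<ge> 1 \<Longrightarrow> F \<in> set_pmf (urn_dist p \<alpha> k) \<Longrightarrow> 0 \<le> urn_pnext p \<alpha> k F"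
begin

abbreviation E :: "nat \<Rightarrow> ((nat \<Rightarrow> nat) \<Rightarrow> real) \<Rightarrow> real" where
  "E k f \<equiv> measure_pmf.expectation (urn_dist p \<alpha> k) f"

lemma set_urn_step_pmf_reachable:
  assumes "k \<ge> 1" and "F \<in> set_pmf (urn_dist p \<alpha> k)"
  shows "set_pmf (urn_step_pmf p \<alpha> k F) \<subseteq> insert None (Some ` {i. 1 \<le> i \<and> i \<le> k \<and> 0 < F i})"
  using set_urn_step_pmf[OF p_nonneg p_le_1 alpha_gt assms(1) urn_pnext_nonneg[OF assms]] .

lemma pmf_urn_step_pmf_None:
  assumes "k \<ge> 1" and "F \<in> set_pmf (urn_dist p \<alpha> k)"
  shows "pmf (urn_step_pmf p \<alpha> k F) None = urn_pnext p \<alpha> k F"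
  using pmf_urn_step_pmf[OF p_nonneg p_le_1 alpha_gt assms(1) urn_pnext_nonneg[OF assms]]
  by (simp add: urn_step_prob_def)

lemma finite_set_urn_step_pmf:
  assumes "k \<ge> 1" and "F \<in> set_pmf (urn_dist p \<alpha> k)"
  shows "finite (set_pmf (urn_step_pmf p \<alpha> k F))"
  using set_urn_step_pmf_reachable[OF assms] by (rule finite_subset) simp

lemma urn_state_urn_dist:
  assumes "k \<ge> 1" and "F \<in> set_pmf (urn_dist p \<alpha> k)"
  shows "urn_state k F"
  using assms
proof (induction k arbitrary: F rule: nat_induct_at_least)
  case base
  then show ?case
    using urn_state_init by simp
next
  case (Suc k)
  then obtain G oc where "G \<in> set_pmf (urn_dist p \<alpha> k)" "oc \<in> set_pmf (urn_step_pmf p \<alpha> k G)"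
    and "F = urn_apply G oc"
    by (auto simp: urn_dist_Suc)
  then show ?case
    using Suc.IH Suc.hyps set_urn_step_pmf_reachable urn_state_urn_apply(1) by blast
qed

lemma finite_set_urn_dist:
  assumes "k \<ge> 1"
  shows "finite (set_pmf (urn_dist p \<alpha> k))"
  using assms
proof (induction k rule: nat_induct_at_least)
  case (Suc k)
  then show ?case
    using finite_set_urn_step_pmf by (simp add: urn_dist_Suc)
qed simp

lemma expectation_urn_pnext:
  assumes "k \<ge> 1" and "E k (urn_balls k) = 1 + (real k - 1) * p"
  shows "E k (urn_pnext p \<alpha> k) = p"
proof -
  have den: "urn_den p \<alpha> k = real k + \<alpha> * (1 + (real k - 1) * p)"
    by (simp add: urn_den_def algebra_simps)
  have "urn_den p \<alpha> k > 0"
    using urn_den_pos[OF p_nonneg p_le_1 alpha_gt assms(1)] .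
  moreover have "E k (urn_pnext p \<alpha> k)
      = E k (\<lambda>F. 1 - (1 - p) * (real k + \<alpha> * urn_balls k F) / urn_den p \<alpha> k)"
    using urn_state_urn_dist[OF assms(1)] urn_pnext_urn_state by (intro expectation_cong_pmf) blast
  ultimately show ?thesis
    using assms(2) finite_set_urn_dist[OF assms(1)]
    by (simp add: integrable_measure_pmf_finite diff_divide_distrib add_divide_distrib
        mult.assoc flip: den)
qed

lemma expectation_urn_balls_Suc:
  assumes "k \<ge> 1"
  shows "E (Suc k) (urn_balls (Suc k)) = E k (urn_balls k) + E k (urn_pnext p \<alpha> k)"
proof -
  have fin: "finite (set_pmf (urn_dist p \<alpha> k))"
    using finite_set_urn_dist[OF assms] .
  have step: "measure_pmf.expectation (urn_step_pmf p \<alpha> k F) (\<lambda>oc. urn_balls (Suc k) (urn_apply F oc))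
      = urn_balls k F + urn_pnext p \<alpha> k F" if F: "F \<in> set_pmf (urn_dist p \<alpha> k)" for F
  proof -
    have "measure_pmf.expectation (urn_step_pmf p \<alpha> k F) (\<lambda>oc. urn_balls (Suc k) (urn_apply F oc))
        = measure_pmf.expectation (urn_step_pmf p \<alpha> k F) (\<lambda>oc. urn_balls k F + indicator {None} oc)"
      using urn_state_urn_apply(2)[OF urn_state_urn_dist[OF assms F] assms]
        set_urn_step_pmf_reachable[OF assms F]
      by (intro expectation_cong_pmf) (auto simp: indicator_def)
    also have "\<dots> = urn_balls k F + pmf (urn_step_pmf p \<alpha> k F) None"
      using finite_set_urn_step_pmf[OF assms F]
      by (simp add: integrable_measure_pmf_finite measure_pmf_single)
    also have "pmf (urn_step_pmf p \<alpha> k F) None = urn_pnext p \<alpha> k F"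
      using pmf_urn_step_pmf_None[OF assms F] .
    finally show ?thesis .
  qed
  have "E (Suc k) (urn_balls (Suc k))
      = E k (\<lambda>F. measure_pmf.expectation (urn_step_pmf p \<alpha> k F) (\<lambda>oc. urn_balls (Suc k) (urn_apply F oc)))"
    using fin finite_set_urn_step_pmf[OF assms]
    by (simp add: urn_dist_Suc[OF assms] expectation_bind_pmf_finite)
  also have "\<dots> = E k (\<lambda>F. urn_balls k F + urn_pnext p \<alpha> k F)"
    using step by (rule expectation_cong_pmf)
  also have "\<dots> = E k (urn_balls k) + E k (urn_pnext p \<alpha> k)"
    using fin by (simp add: integrable_measure_pmf_finite)
  finally show ?thesis .
qed

lemma expectation_urn_balls:
  assumes "k \<ge> 1"
  shows "E k (urn_balls k) = 1 + (real k - 1) * p"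
  using assms
proof (induction k rule: nat_induct_at_least)
  case base
  then show ?case by (simp add: urn_balls_def urn_init_def)
next
  case (Suc k)
  then show ?case
    by (simp add: expectation_urn_balls_Suc expectation_urn_pnext algebra_simps)
qed

end

theorem lemmaA1:
  fixes p \<alpha> :: real and k :: nat
  assumes "0 < p" and "p < 1" and "\<alpha> > -1"
    and well_defined: "\<forall>j\<ge>1. \<forall>F\<in>set_pmf (urn_dist p \<alpha> j).
                          0 \<le> urn_pnext p \<alpha> j F \<and> urn_pnext p \<alpha> j F \<le> 1"
    and "k > 1"
  shows "measure_pmf.expectation (urn_dist p \<alpha> k) (\<lambda>F. infsum (\<lambda>i. real (F i)) {1..})
           = 1 + (real k - 1) * p
       \<and> measure_pmf.expectation (urn_dist p \<alpha> k) (\<lambda>F. \<Sum>i=1..k. real (F i))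
           = 1 + (real k - 1) * p
       \<and> measure_pmf.expectation (urn_dist p \<alpha> (k - 1)) (\<lambda>F. urn_pnext p \<alpha> (k - 1) F) = p"
proof -
  interpret urn_process p \<alpha>
    using assms by unfold_locales auto
  have k: "k \<ge> 1" "k - 1 \<ge> 1"
    using \<open>k > 1\<close> by auto
  have "E k (\<lambda>F. infsum (\<lambda>i. real (F i)) {1..}) = E k (urn_balls k)"
    using urn_state_urn_dist[OF k(1)] infsum_urn_state by (intro expectation_cong_pmf) blast
  then show ?thesis
    using expectation_urn_balls k expectation_urn_pnext
    by (simp add: urn_balls_def[abs_def])
qed

end
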